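(* Let $p$ be an odd prime and let $B$ be the $p\times p$ matrix over $\mathbb{F}_p$ with rows and columns indexed by $0,1,\dots,p-1$, defined by $B(s,s)=0$ and $B(s,t)=(s-t)^{-1}$ for $s\neq t$. Then $\operatorname{rank}(B)=p-1$. *)

theory Defs
  imports "Jordan_Normal_Form.DL_Rank" "Berlekamp_Zassenhaus.Finite_Field"
begin

definition inv_diff_mat :: "'p::prime_card mod_ring mat" where
  "inv_diff_mat = mat CARD('p) CARD('p)
     (\<lambda>(s, t). if s = t then 0 else inverse (of_nat s - of_nat t))"

end

theory Submission
  imports Defs
begin

text \<open>Let \<open>V\<close> be the Vandermonde matrix of the points \<open>0, \<dots>, p - 1\<close> of \<open>\<bbbF>\<^sub>p\<close> and \<open>D\<close> the
  matrix of formal differentiation on polynomials of degree \<open>< p\<close>. The power sums \<open>\<Sum>\<^sub>x x\<^sup>k\<close>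
  vanish for \<open>k < p - 1\<close>; as \<open>p > 2\<close>, this gives \<open>\<Sum>\<^sub>x x\<^sup>j / (a - x) = j a\<^sup>j\<^sup>-\<^sup>1\<close>, i.e.
  \<open>B V = V D\<close>: \<open>B\<close> acts on polynomial functions by differentiation. So \<open>B\<close> is similar to the
  nilpotent \<open>D\<close> and \<open>det B = 0\<close>. Adding the corner entry \<open>E = e\<^sub>p\<^sub>-\<^sub>1 e\<^sub>0\<^sup>T\<close> makes
  \<open>D + E\<close> invertible, since \<open>1, \<dots>, p - 1\<close> are units of \<open>\<bbbF>\<^sub>p\<close>, and \<open>B + V E\<close> is similar to
  \<open>D + E\<close>. As \<open>V E\<close> has rank one, \<open>rank B \<ge> p - 1\<close>.\<close>

lemma finite_field_power_ne_1:
  assumes "0 < k" "k < CARD('a::{finite,field}) - 1"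
  obtains c :: "'a::{finite,field}" where "c \<noteq> 0" "c ^ k \<noteq> 1"
proof -
  have "\<exists>c::'a. c \<noteq> 0 \<and> c ^ k \<noteq> 1"
  proof (rule ccontr)
    assume "\<not> ?thesis"
    then have "poly (Polynomial.monom 1 k) c = poly 1 c" if "c \<in> UNIV - {0}" for c :: 'a
      using that by (auto simp: poly_monom)
    moreover have "card (UNIV - {0 :: 'a}) = CARD('a) - 1"
      by (simp add: card_Diff_singleton)
    ultimately have "Polynomial.monom 1 k = (1 :: 'a poly)"
      using assms by (intro poly_eqI_degree[of "UNIV - {0}"]) (auto simp: degree_monom_eq)
    then show False
      using assms degree_monom_eq[of 1 k] by (metis degree_1 less_irrefl one_neq_zero)
  qed
  then show ?thesis
    using that by blast
qed

lemma of_nat_card_finite_ring: "of_nat CARD('a::{finite,ring_1}) = (0 :: 'a)"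
proof -
  have "(\<Sum>x\<in>UNIV. x) = (\<Sum>x\<in>UNIV. x + 1 :: 'a)"
    by (rule sum.reindex_bij_witness[of _ "\<lambda>x. x + 1" "\<lambda>x. x - 1"]) auto
  also have "\<dots> = (\<Sum>x\<in>UNIV. x) + of_nat CARD('a)"
    by (simp add: sum.distrib)
  finally show ?thesis
    by simp
qed

lemma sum_powers_finite_field:
  assumes "k < CARD('a::{finite,field}) - 1"
  shows "(\<Sum>x::'a\<in>UNIV. x ^ k) = 0"
proof (cases "k = 0")
  case True
  then show ?thesis
    by (simp add: of_nat_card_finite_ring)
next
  case False
  with assms obtain c :: 'a where c: "c \<noteq> 0" "c ^ k \<noteq> 1"
    by (auto elim: finite_field_power_ne_1)
  have "(\<Sum>x\<in>UNIV. x ^ k) = (\<Sum>x\<in>UNIV. (c * x) ^ k)"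
    by (rule sum.reindex_bij_witness[of _ "\<lambda>x. c * x" "\<lambda>x. x / c"]) (use c in auto)
  also have "\<dots> = c ^ k * (\<Sum>x\<in>UNIV. x ^ k)"
    by (simp add: power_mult_distrib sum_distrib_left)
  finally have "(1 - c ^ k) * (\<Sum>x\<in>UNIV. x ^ k) = 0"
    by (simp add: algebra_simps)
  then show ?thesis
    using c by simp
qed

lemma sum_inverse_diff_finite_field:
  assumes "2 < CARD('a::{finite,field})"
  shows "(\<Sum>x\<in>UNIV. inverse (a - x :: 'a)) = 0"
proof -
  have "(\<Sum>x\<in>UNIV. inverse (a - x)) = (\<Sum>x\<in>UNIV. inverse x :: 'a)"
    by (rule sum.reindex_bij_witness[of _ "\<lambda>x. a - x" "\<lambda>x. a - x"]) auto
  also have "\<dots> = (\<Sum>x\<in>UNIV. x ^ 1)"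
    by (rule sum.reindex_bij_witness[of _ inverse inverse]) auto
  also have "\<dots> = 0"
    using assms by (intro sum_powers_finite_field) simp
  finally show ?thesis .
qed

lemma sum_inverse_diff_mult_power_finite_field:
  assumes "2 < CARD('a::{finite,field})" "j < CARD('a)"
  shows "(\<Sum>x\<in>UNIV. inverse (a - x) * x ^ j) = of_nat j * (a :: 'a) ^ (j - 1)"
proof -
  define S where "S x = (\<Sum>i<j. x ^ (j - Suc i) * a ^ i)" for x :: 'a
  \<comment> \<open>\<open>x\<^sup>j = a\<^sup>j - (a - x) S x\<close>; the last summand repairs the term \<open>x = a\<close>, where \<open>inverse 0 = 0\<close>.\<close>
  have split: "inverse (a - x) * x ^ j = inverse (a - x) * a ^ j - S x + (if x = a then S a else 0)"
    for x
  proof (cases "x = a")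
    case False
    have "x ^ j = a ^ j - (a - x) * S x"
      using power_diff_sumr2[of a j x] unfolding S_def by (simp add: algebra_simps)
    then have "inverse (a - x) * x ^ j = inverse (a - x) * a ^ j - inverse (a - x) * (a - x) * S x"
      by (simp add: right_diff_distrib mult.assoc)
    then show ?thesis
      using False by simp
  qed simp
  have "(\<Sum>x\<in>UNIV. inverse (a - x) * a ^ j) = 0"
    using sum_inverse_diff_finite_field[OF assms(1), of a]
    by (simp add: sum_distrib_right[symmetric])
  moreover have "(\<Sum>x\<in>UNIV. S x) = 0"
  proof -
    have "(\<Sum>x\<in>UNIV. S x) = (\<Sum>i<j. a ^ i * (\<Sum>x\<in>UNIV. x ^ (j - Suc i)))"
      unfolding S_def by (subst sum.swap) (simp add: sum_distrib_left mult.commute)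
    also have "\<dots> = 0"
      using assms(2) by (intro sum.neutral) (auto intro: sum_powers_finite_field)
    finally show ?thesis .
  qed
  moreover have "S a = of_nat j * a ^ (j - 1)"
  proof -
    have "S a = (\<Sum>i<j. a ^ (j - 1))"
      unfolding S_def by (rule sum.cong) (auto simp: power_add[symmetric])
    then show ?thesis
      by simp
  qed
  ultimately show ?thesis
    by (simp add: split sum.distrib sum_subtractf)
qed

definition vandermonde_mat :: "nat \<Rightarrow> (nat \<Rightarrow> 'a::comm_ring_1) \<Rightarrow> 'a mat" where
  "vandermonde_mat n x = mat n n (\<lambda>(i, j). x i ^ j)"

definition deriv_mat :: "nat \<Rightarrow> 'a::semiring_1 mat" where
  "deriv_mat n = mat n n (\<lambda>(i, j). if j = Suc i then of_nat j else 0)"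

definition bottom_left_unit_mat :: "nat \<Rightarrow> 'a::zero_neq_one mat" where
  "bottom_left_unit_mat n = mat n n (\<lambda>(i, j). if i = n - 1 \<and> j = 0 then 1 else 0)"

lemma vandermonde_mat_carrier [simp]: "vandermonde_mat n x \<in> carrier_mat n n"
  by (simp add: vandermonde_mat_def)

lemma deriv_mat_carrier [simp]: "deriv_mat n \<in> carrier_mat n n"
  by (simp add: deriv_mat_def)

lemma bottom_left_unit_mat_carrier [simp]: "bottom_left_unit_mat n \<in> carrier_mat n n"
  by (simp add: bottom_left_unit_mat_def)

lemma det_vandermonde_mat_ne_0:
  fixes x :: "nat \<Rightarrow> 'a::field"
  assumes "inj_on x {..<n}"
  shows "det (vandermonde_mat n x) \<noteq> 0"
proof
  assume "det (vandermonde_mat n x) = 0"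
  then obtain c where c: "c \<in> carrier_vec n" "c \<noteq> 0\<^sub>v n" "vandermonde_mat n x *\<^sub>v c = 0\<^sub>v n"
    using det_0_iff_vec_prod_zero_field[of "vandermonde_mat n x" n] by auto
  define Q where "Q = (\<Sum>j<n. Polynomial.monom (c $ j) j)"
  have coeff_Q: "Polynomial.coeff Q k = (if k < n then c $ k else 0)" for k
    unfolding Q_def by (simp add: coeff_sum coeff_monom)
  have "0 < n"
    using c(1,2) by (cases n) auto
  have "poly Q (x i) = poly 0 (x i)" if "i < n" for i
  proof -
    have "poly Q (x i) = (vandermonde_mat n x *\<^sub>v c) $ i"
      using that c(1)
      by (simp add: Q_def poly_sum poly_monom vandermonde_mat_def scalar_prod_def atLeast0LessThan
          mult.commute)
    then show ?thesis
      using c(3) that by simp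
  qed
  moreover have "degree Q \<le> n - 1"
    by (rule degree_le) (auto simp: coeff_Q)
  then have "degree Q < card (x ` {..<n})"
    using \<open>0 < n\<close> assms by (simp add: card_image)
  ultimately have "Q = 0"
    by (intro poly_eqI_degree[of "x ` {..<n}"]) auto
  then have "c $ j = 0" if "j < n" for j
    using coeff_Q[of j] that by simp
  then have "c = 0\<^sub>v n"
    using c(1) by (intro eq_vecI) auto
  with c(2) show False ..
qed

lemma det_deriv_mat:
  assumes "0 < n"
  shows "det (deriv_mat n :: 'a::comm_ring_1 mat) = 0"
proof -
  have "upper_triangular (deriv_mat n :: 'a mat)"
    by (auto simp: upper_triangular_def deriv_mat_def)
  then have "det (deriv_mat n :: 'a mat) = (\<Prod>i = 0..<n. deriv_mat n $$ (i, i))"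
    by (simp add: det_upper_triangular[of _ n] prod_list_diag_prod
        carrier_matD[OF deriv_mat_carrier])
  also have "\<dots> = 0"
    by (intro prod_zero) (use assms in \<open>auto simp: deriv_mat_def\<close>)
  finally show ?thesis .
qed

lemma det_deriv_plus_bottom_left_unit_mat_ne_0:
  assumes units: "\<And>j. 0 < j \<Longrightarrow> j < n \<Longrightarrow> (of_nat j :: 'a::field) \<noteq> 0"
  shows "det (deriv_mat n + bottom_left_unit_mat n :: 'a mat) \<noteq> 0"
proof
  let ?F = "deriv_mat n + bottom_left_unit_mat n :: 'a mat"
  assume "det ?F = 0"
  then obtain w where w: "w \<in> carrier_vec n" "w \<noteq> 0\<^sub>v n" "?F *\<^sub>v w = 0\<^sub>v n"
    using det_0_iff_vec_prod_zero_field[of ?F n] by auto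
  have row: "(?F *\<^sub>v w) $ i = (if Suc i < n then of_nat (Suc i) * w $ Suc i else 0)
      + (if i = n - 1 then w $ 0 else 0)" if "i < n" for i
  proof -
    have "(?F *\<^sub>v w) $ i = (\<Sum>k<n. ((if k = Suc i then of_nat k else 0)
        + (if i = n - 1 \<and> k = 0 then 1 else 0)) * w $ k)"
      using that w(1)
      by (simp add: deriv_mat_def bottom_left_unit_mat_def scalar_prod_def atLeast0LessThan)
    also have "\<dots> = (\<Sum>k<n. (if k = Suc i then of_nat k * w $ k else 0)
        + (if i = n - 1 then if k = 0 then w $ k else 0 else 0))"
      by (rule sum.cong) (auto simp: distrib_right)
    finally show ?thesis
      using that by (simp add: sum.distrib)
  qed
  have "0 < n"
    using w(1,2) by (cases n) auto
  then have w0: "w $ 0 = 0"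
    using row[of "n - 1"] w(3) by simp
  have w_Suc: "w $ Suc i = 0" if "Suc i < n" for i
  proof -
    have "i \<noteq> n - 1"
      using that by simp
    then show ?thesis
      using row[of i] w(3) that units[of "Suc i"] by simp
  qed
  have "w $ j = 0" if "j < n" for j
    using that w0 w_Suc by (cases j) auto
  then have "w = 0\<^sub>v n"
    using w(1) by (intro eq_vecI) auto
  with w(2) show False ..
qed

lemma vandermonde_mat_mult_deriv_mat_nth:
  assumes "i < n" "j < n"
  shows "(vandermonde_mat n x * deriv_mat n) $$ (i, j) = of_nat j * x i ^ (j - 1)"
proof -
  have "(vandermonde_mat n x * deriv_mat n) $$ (i, j)
      = (\<Sum>k<n. x i ^ k * (if j = Suc k then of_nat j else 0))"
    using assms by (simp add: vandermonde_mat_def deriv_mat_def scalar_prod_def atLeast0LessThan)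
  also have "\<dots> = (\<Sum>k<n. if j = Suc k then x i ^ k * of_nat j else 0)"
    by (intro sum.cong) simp_all
  finally show ?thesis
    using assms by (cases j) (auto simp: mult.commute)
qed

lemma bottom_left_unit_mat_mult_vandermonde_mat:
  assumes "x 0 = 0"
  shows "bottom_left_unit_mat n * vandermonde_mat n x = bottom_left_unit_mat n"
  using assms
  by (intro eq_matI) (auto simp: bottom_left_unit_mat_def vandermonde_mat_def scalar_prod_def
      atLeast0LessThan if_distrib if_distribR zero_power cong: if_cong)

lemma rank_mult_bottom_left_unit_mat_le_1:
  assumes "A \<in> carrier_mat n n"
  shows "vec_space.rank n (A * bottom_left_unit_mat n :: 'a::field mat) \<le> 1"
proof (rule vec_space.rank_le_1_product_entries
    [where f = "\<lambda>i. A $$ (i, n - 1)" and g = "\<lambda>j. of_bool (j = 0)"])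
  show "A * bottom_left_unit_mat n \<in> carrier_mat n n"
    using assms by simp
next
  fix i j
  assume "i < dim_row (A * bottom_left_unit_mat n)" "j < dim_col (A * bottom_left_unit_mat n)"
  then show "(A * bottom_left_unit_mat n) $$ (i, j) = A $$ (i, n - 1) * of_bool (j = 0)"
    using assms
    by (auto simp: bottom_left_unit_mat_def scalar_prod_def atLeast0LessThan
        if_distrib if_distribR cong: if_cong)
qed

lemma det_eq_if_intertwined:
  assumes "A \<in> carrier_mat n n" "M \<in> carrier_mat n n" "V \<in> carrier_mat n n"
    and "det V \<noteq> 0" and "A * V = V * M"
  shows "det A = det (M :: 'a::idom mat)"
proof -
  have "det A * det V = det M * det V"
    using det_mult[of A n V] det_mult[of V n M] assms by (simp add: mult.commute)
  then show ?thesis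
    using \<open>det V \<noteq> 0\<close> by simp
qed

lemma intertwined_add_mult:
  assumes "A \<in> carrier_mat n n" "V \<in> carrier_mat n n" "M \<in> carrier_mat n n" "E \<in> carrier_mat n n"
    and "A * V = V * M" and "E * V = E"
  shows "(A + V * E) * V = V * (M + E :: 'a::semiring_0 mat)"
proof -
  have "(A + V * E) * V = A * V + V * (E * V)"
    using assms(1,2,4)
    by (simp add: add_mult_distrib_mat[of _ n n _ _ n] assoc_mult_mat[of _ n n _ n _ n])
  also have "\<dots> = V * (M + E)"
    using assms by (simp add: mult_add_distrib_mat[of _ n n _ n])
  finally show ?thesis .
qed

lemma bij_betw_of_nat_mod_ring:
  "bij_betw (of_nat :: nat \<Rightarrow> 'p::prime_card mod_ring) {..<CARD('p)} UNIV"
proof (rule bij_betw_imageI)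
  show "inj_on (of_nat :: nat \<Rightarrow> 'p mod_ring) {..<CARD('p)}"
    by (auto simp: inj_on_def of_nat_eq_iff_cong_CHAR cong_less_modulus_unique_nat)
  show "(of_nat :: nat \<Rightarrow> 'p mod_ring) ` {..<CARD('p)} = UNIV"
    using surj_of_nat_mod_ring by fastforce
qed

lemma of_nat_mod_ring_ne_0:
  assumes "0 < j" "j < CARD('p)"
  shows "(of_nat j :: 'p::prime_card mod_ring) \<noteq> 0"
  using inj_onD[OF bij_betw_imp_inj_on[OF bij_betw_of_nat_mod_ring[where 'p = 'p]], of j 0] assms
  by auto

lemma inv_diff_mat_nth:
  assumes "s < CARD('p)" "t < CARD('p)"
  shows "(inv_diff_mat :: 'p::prime_card mod_ring mat) $$ (s, t) = inverse (of_nat s - of_nat t)"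
  using assms unfolding inv_diff_mat_def by auto

lemma inv_diff_mat_carrier [simp]:
  "(inv_diff_mat :: 'p::prime_card mod_ring mat) \<in> carrier_mat CARD('p) CARD('p)"
  unfolding inv_diff_mat_def by simp

lemma inv_diff_mat_mult_vandermonde_mat:
  assumes "CARD('p::prime_card) \<noteq> 2"
  shows "inv_diff_mat * vandermonde_mat CARD('p) of_nat
    = vandermonde_mat CARD('p) of_nat * (deriv_mat CARD('p) :: 'p mod_ring mat)"
proof (rule eq_matI)
  fix s j
  assume "s < dim_row (vandermonde_mat CARD('p) of_nat * (deriv_mat CARD('p) :: 'p mod_ring mat))"
    "j < dim_col (vandermonde_mat CARD('p) of_nat * (deriv_mat CARD('p) :: 'p mod_ring mat))"
  then have s: "s < CARD('p)" and j: "j < CARD('p)"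
    by (simp_all add: vandermonde_mat_def deriv_mat_def)
  have card: "2 < CARD('p mod_ring)"
    using assms prime_ge_2_nat[OF prime_card[where 'a='p]] by simp
  have "(inv_diff_mat * vandermonde_mat CARD('p) of_nat) $$ (s, j)
      = (\<Sum>t<CARD('p). inverse (of_nat s - of_nat t) * (of_nat t :: 'p mod_ring) ^ j)"
    using s j carrier_matD[OF inv_diff_mat_carrier[where 'p = 'p]]
    by (auto simp: inv_diff_mat_nth vandermonde_mat_def scalar_prod_def atLeast0LessThan
        intro!: sum.cong)
  also have "\<dots> = (\<Sum>x\<in>UNIV. inverse (of_nat s - x) * x ^ j)"
    by (rule sum.reindex_bij_betw[OF bij_betw_of_nat_mod_ring])
  also have "\<dots> = of_nat j * of_nat s ^ (j - 1)"
    using card j by (intro sum_inverse_diff_mult_power_finite_field) simp_all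
  also have "\<dots> = (vandermonde_mat CARD('p) of_nat * deriv_mat CARD('p)) $$ (s, j)"
    using s j by (simp add: vandermonde_mat_mult_deriv_mat_nth)
  finally show "((inv_diff_mat :: 'p mod_ring mat) * vandermonde_mat CARD('p) of_nat) $$ (s, j)
      = (vandermonde_mat CARD('p) of_nat * deriv_mat CARD('p)) $$ (s, j)" .
qed (simp_all add: inv_diff_mat_def vandermonde_mat_def deriv_mat_def)

lemma det_inv_diff_mat:
  assumes "CARD('p::prime_card) \<noteq> 2"
  shows "det (inv_diff_mat :: 'p mod_ring mat) = 0"
proof -
  have "det (inv_diff_mat :: 'p mod_ring mat) = det (deriv_mat CARD('p) :: 'p mod_ring mat)"
    using det_vandermonde_mat_ne_0 bij_betw_imp_inj_on[OF bij_betw_of_nat_mod_ring]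
      inv_diff_mat_mult_vandermonde_mat[OF assms]
    by (intro det_eq_if_intertwined[of _ "CARD('p)"]) simp_all
  then show ?thesis
    by (simp add: det_deriv_mat)
qed

lemma det_inv_diff_mat_add_ne_0:
  assumes "CARD('p::prime_card) \<noteq> 2"
  shows "det (inv_diff_mat + vandermonde_mat CARD('p) of_nat * bottom_left_unit_mat CARD('p)
    :: 'p mod_ring mat) \<noteq> 0"
proof -
  let ?n = "CARD('p)"
  let ?V = "vandermonde_mat ?n of_nat :: 'p mod_ring mat"
  let ?E = "bottom_left_unit_mat ?n :: 'p mod_ring mat"
  have "(inv_diff_mat + ?V * ?E) * ?V = ?V * (deriv_mat ?n + ?E)"
    by (intro intertwined_add_mult[of _ ?n] inv_diff_mat_mult_vandermonde_mat[OF assms]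
        bottom_left_unit_mat_mult_vandermonde_mat) simp_all
  then have "det (inv_diff_mat + ?V * ?E) = det (deriv_mat ?n + ?E)"
    using det_vandermonde_mat_ne_0 bij_betw_imp_inj_on[OF bij_betw_of_nat_mod_ring]
    by (intro det_eq_if_intertwined[of _ ?n]) (simp_all add: mult_carrier_mat[of _ ?n ?n])
  then show ?thesis
    using det_deriv_plus_bottom_left_unit_mat_ne_0[of ?n] of_nat_mod_ring_ne_0 by auto
qed

theorem lemma2p11:
  assumes "CARD('p::prime_card) \<noteq> 2"
  shows "vec_space.rank CARD('p) (inv_diff_mat :: 'p mod_ring mat) = CARD('p) - 1"
proof -
  let ?n = "CARD('p)"
  let ?B = "inv_diff_mat :: 'p mod_ring mat"
  let ?C = "vandermonde_mat ?n of_nat * bottom_left_unit_mat ?n :: 'p mod_ring mat"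
  have C: "?C \<in> carrier_mat ?n ?n"
    by (rule mult_carrier_mat[of _ ?n ?n]) simp_all
  have "vec_space.rank ?n ?B < ?n"
    by (intro vec_space.det_zero_low_rank det_inv_diff_mat[OF assms]) simp
  moreover have "vec_space.rank ?n (?B + ?C) = ?n"
    using C by (intro vec_space.low_rank_det_zero det_inv_diff_mat_add_ne_0[OF assms]) simp
  moreover have "vec_space.rank ?n (?B + ?C) \<le> vec_space.rank ?n ?B + vec_space.rank ?n ?C"
    using C by (intro vec_space.rank_subadditive[of _ ?n ?n]) simp_all
  moreover have "vec_space.rank ?n ?C \<le> 1"
    by (rule rank_mult_bottom_left_unit_mat_le_1) simp
  ultimately show ?thesis
    by linarith
qed

end
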